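(* Let $\rho>0$, $m\in(-\sqrt\rho,\sqrt\rho)$, and $\mu=-\frac m{\rho-m^2}$. Let $I\subset\Lambda$ be an index set of fixed size and $f:\mathbb{R}^{|I|}\to\mathbb{R}$ a bounded $1$-Lipschitz function with respect to $\|\cdot\|_2$. Then \[ \langle f\circ P_I\rangle_{\mathrm{MC}}^{m,\rho;N}=\langle f\circ P_I\rangle_{\mathrm{C}}^{\mu,\rho;N}+O(N^{-1/2}). \]
   Context: $\Lambda$ finite lattice with $N=|\Lambda|$ sites, fields $\phi\in\mathbb{R}^\Lambda$; $P_I$ restricts $\phi$ to the sites of $I$. For $\rho>0$, $|m|<\sqrt\rho$, $\mu_{\mathrm{MC}}^{m,\rho;N}$ is the normalized uniform surface measure on $\{\sum_x\phi_x=mN,\ \sum_x\phi_x^2=\rho N\}$. For $\mu\in\mathbb{R}$, the auxiliary canonical ensemble is $\langle f\rangle_{\mathrm{C}}^{\mu,\rho;N}=\frac{\int_{-\sqrt\rho}^{\sqrt\rho}dm'\,e^{-\mu Nm'}(\rho-m'^2)^{(N-3)/2}\langle f\rangle_{\mathrm{MC}}^{m',\rho;N}}{\int_{-\sqrt\rho}^{\sqrt\rho}dm'\,e^{-\mu Nm'}(\rho-m'^2)^{(N-3)/2}}$. $O(N^{-1/2})$ refers to $N\to\infty$ with a constant independent of $N$. *)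

theory Defs
  imports "HOL-Analysis.Analysis"
begin

text \<open>Sites of the lattice: \<Lambda> = {0..<N}. Fields are functions nat \<Rightarrow> real,
  only the values at sites i < N matter.\<close>

text \<open>Linear parametrisation of the (N-1)-dimensional hyperplane V = {psi. sum psi = 0}
  of R^Lambda by its first N-1 coordinates.\<close>
definition hyp_param :: "nat \<Rightarrow> (nat \<Rightarrow> real) \<Rightarrow> (nat \<Rightarrow> real)" where
  "hyp_param N y = (\<lambda>i. if i < N - 1 then y i
                         else if i = N - 1 then - (\<Sum>j<N - 1. y j) else 0)"

definition field_norm :: "nat \<Rightarrow> (nat \<Rightarrow> real) \<Rightarrow> real" where
  "field_norm N \<phi> = sqrt (\<Sum>i<N. (\<phi> i)\<^sup>2)"

definition param_space :: "nat \<Rightarrow> (nat \<Rightarrow> real) measure" where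
  "param_space N = PiM {..<N - 1} (\<lambda>_. lborel)"

definition param_ball :: "nat \<Rightarrow> (nat \<Rightarrow> real) set" where
  "param_ball N = {y \<in> space (param_space N). field_norm N (hyp_param N y) \<le> 1}"

text \<open>The point of the microcanonical surface
  {sum phi = m N, sum phi^2 = rho N} obtained by radially projecting psi = hyp_param N y.\<close>
definition mc_point :: "nat \<Rightarrow> real \<Rightarrow> real \<Rightarrow> (nat \<Rightarrow> real) \<Rightarrow> (nat \<Rightarrow> real)" where
  "mc_point N m \<rho> y = (\<lambda>i. if i < N then
      m + sqrt (real N * (\<rho> - m\<^sup>2)) * hyp_param N y i / field_norm N (hyp_param N y)
     else 0)"

text \<open>Microcanonical expectation: normalized uniform surface measure on the
  (N-2)-sphere {sum phi = m N, sum phi^2 = rho N}, realised as the cone measure of the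
  round sphere in the hyperplane (which coincides with the normalized surface measure):
  E[F] = (1/vol B) \<integral>_B F(centre + R x/|x|) dx, B the unit ball of V.  Lebesgue measure
  on V is computed through the linear parametrisation hyp_param; the constant Jacobian
  factor cancels in the normalisation.\<close>
definition mc_expect :: "nat \<Rightarrow> real \<Rightarrow> real \<Rightarrow> ((nat \<Rightarrow> real) \<Rightarrow> real) \<Rightarrow> real" where
  "mc_expect N m \<rho> F =
     (LINT y:param_ball N|param_space N. F (mc_point N m \<rho> y))
       / measure (param_space N) (param_ball N)"

definition can_weight :: "nat \<Rightarrow> real \<Rightarrow> real \<Rightarrow> real \<Rightarrow> real" where
  "can_weight N \<mu> \<rho> m' = exp (- \<mu> * real N * m') * (\<rho> - m'\<^sup>2) powr ((real N - 3) / 2)"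

definition can_expect :: "nat \<Rightarrow> real \<Rightarrow> real \<Rightarrow> ((nat \<Rightarrow> real) \<Rightarrow> real) \<Rightarrow> real" where
  "can_expect N \<mu> \<rho> F =
     (LBINT m'=- sqrt \<rho>..sqrt \<rho>. can_weight N \<mu> \<rho> m' * mc_expect N m' \<rho> F)
       / (LBINT m'=- sqrt \<rho>..sqrt \<rho>. can_weight N \<mu> \<rho> m')"

text \<open>Restriction P_I to the sites of I, where I is enumerated by an injective map
  iota from a finite type 'k (|I| = CARD('k)) into the sites.\<close>
definition restrict_to :: "('k::finite \<Rightarrow> nat) \<Rightarrow> (nat \<Rightarrow> real) \<Rightarrow> real ^ 'k" where
  "restrict_to \<iota> \<phi> = (\<chi> j. \<phi> (\<iota> j))"

end

theory Submission
  imports Defs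
begin

text \<open>A point of the microcanonical sphere with magnetisation m' is
  m' + sqrt (N (\<rho> - m'^2)) u, with u uniformly distributed on the unit sphere of the hyperplane
  \<Sum>_x \<phi>_x = 0.  Exchangeability of the coordinates gives E u_j^2 \<le> 1/N, hence E |u_j| \<le> N^(-1/2):
  moving m' moves each observed coordinate by O(|m' - m|) on average, so the microcanonical
  expectation of the Lipschitz observable f \<circ> P_I is Lipschitz in m' uniformly in N.
  The canonical expectation averages it against the weight
  w(m') = exp (- \<mu> N m') (\<rho> - m'^2)^((N - 3)/2), which for \<mu> = - m / (\<rho> - m^2) peaks at m with
  width N^(-1/2): a Gaussian upper bound gives \<integral> w |m' - m| = O(w(m) / N), and a window of width
  N^(-1/2) around m gives \<integral> w \<ge> c w(m) N^(-1/2).\<close>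

section \<open>Exchangeability of the coordinates on the sphere\<close>

lemma hyp_param_measurable [measurable]:
  "(\<lambda>y. hyp_param N y i) \<in> borel_measurable (param_space N)"
  unfolding hyp_param_def param_space_def
  by (cases "i < N - 1") (auto intro!: borel_measurable_sum measurable_component_singleton)

lemma field_norm_hyp_param_measurable [measurable]:
  "(\<lambda>y. field_norm N (hyp_param N y)) \<in> borel_measurable (param_space N)"
  unfolding field_norm_def by measurable

lemma param_ball_sets [measurable]: "param_ball N \<in> sets (param_space N)"
  unfolding param_ball_def by measurable

lemma integral_indicator_param_ball:
  "(\<integral>y. indicator (param_ball N) y \<partial>param_space N) = measure (param_space N) (param_ball N)"
  using sets.sets_into_space[OF param_ball_sets] by (simp add: Int_absorb2)

lemma integrable_param_ball_bounded:
  fixes c :: real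
  assumes "emeasure (param_space N) (param_ball N) < \<infinity>" "g \<in> borel_measurable (param_space N)"
    and "\<And>y. y \<in> param_ball N \<Longrightarrow> \<bar>g y\<bar> \<le> c"
  shows "integrable (param_space N) (\<lambda>y. indicator (param_ball N) y * g y)"
  by (rule integrableI_bounded_set[where A="param_ball N" and B=c]) (use assms in auto)

definition param_swap :: "nat \<Rightarrow> nat \<Rightarrow> (nat \<Rightarrow> real) \<Rightarrow> (nat \<Rightarrow> real)" where
  "param_swap N i y = y(i := - (\<Sum>j<N - 1. y j))"

lemma param_swap_measurable [measurable]:
  assumes "i < N - 1"
  shows "param_swap N i \<in> measurable (param_space N) (param_space N)"
  unfolding param_space_def
proof (rule measurable_PiM_single')
  fix j assume j: "j \<in> {..<N - 1}"
  show "(\<lambda>y. param_swap N i y j) \<in> measurable (Pi\<^sub>M {..<N - 1} (\<lambda>_. lborel)) lborel"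
    unfolding param_swap_def using j
    by (cases "j = i") (auto intro!: borel_measurable_sum measurable_component_singleton)
next
  show "param_swap N i \<in> space (Pi\<^sub>M {..<N - 1} (\<lambda>_. lborel)) \<rightarrow> (\<Pi>\<^sub>E j\<in>{..<N - 1}. space lborel)"
    using assms by (auto simp: param_swap_def space_PiM PiE_def extensional_def)
qed

text \<open>With the other coordinates fixed, \<open>param_swap N i\<close> is the reflection
  \<open>t \<mapsto> - c - t\<close> in coordinate \<open>i\<close>, so it preserves Lebesgue measure.\<close>
lemma nn_integral_param_swap:
  assumes i: "i < N - 1" and h[measurable]: "h \<in> borel_measurable (param_space N)"
  shows "(\<integral>\<^sup>+y. h (param_swap N i y) \<partial>param_space N) = (\<integral>\<^sup>+y. h y \<partial>param_space N)"
proof -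
  interpret product_sigma_finite "\<lambda>_. lborel :: real measure" by standard
  define J where "J = {..<N - 1} - {i}"
  have IJ: "{..<N - 1} = insert i J" and J: "finite J" "i \<notin> J"
    using i by (auto simp: J_def)
  have hm: "h \<in> borel_measurable (Pi\<^sub>M (insert i J) (\<lambda>_. lborel))"
    using h unfolding param_space_def IJ .
  have hsm: "(\<lambda>y. h (param_swap N i y)) \<in> borel_measurable (Pi\<^sub>M (insert i J) (\<lambda>_. lborel))"
    using measurable_comp[OF param_swap_measurable[OF i] h] unfolding param_space_def IJ
    by (simp add: o_def)
  have reflect: "(\<integral>\<^sup>+t. h (param_swap N i (x(i := t))) \<partial>lborel) = (\<integral>\<^sup>+t. h (x(i := t)) \<partial>lborel)"
    if x: "x \<in> space (Pi\<^sub>M J (\<lambda>_. lborel))" for x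
  proof -
    define c where "c = (\<Sum>j\<in>J. x j)"
    have "(\<Sum>j<N - 1. (x(i := t)) j) = t + c" for t
      unfolding IJ c_def using J by (auto simp: sum.insert_if intro!: sum.cong)
    then have swap: "param_swap N i (x(i := t)) = x(i := - c + (-1) * t)" for t
      by (simp add: param_swap_def fun_eq_iff)
    have "(\<lambda>t. x(i := t)) \<in> measurable lborel (Pi\<^sub>M (insert i J) (\<lambda>_. lborel))"
      using measurable_component_update[OF x J(2)] by simp
    from measurable_comp[OF this hm] have "(\<lambda>t. h (x(i := t))) \<in> borel_measurable borel"
      by (simp add: o_def)
    from nn_integral_real_affine[OF this, of "-1" "- c"] show ?thesis
      unfolding swap by simp
  qed
  have "(\<integral>\<^sup>+y. h (param_swap N i y) \<partial>param_space N)
      = (\<integral>\<^sup>+x. (\<integral>\<^sup>+t. h (param_swap N i (x(i := t))) \<partial>lborel) \<partial>Pi\<^sub>M J (\<lambda>_. lborel))"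
    unfolding param_space_def IJ by (rule product_nn_integral_insert[OF J hsm])
  also have "\<dots> = (\<integral>\<^sup>+x. (\<integral>\<^sup>+t. h (x(i := t)) \<partial>lborel) \<partial>Pi\<^sub>M J (\<lambda>_. lborel))"
    by (rule nn_integral_cong) (use reflect in auto)
  also have "\<dots> = (\<integral>\<^sup>+y. h y \<partial>param_space N)"
    unfolding param_space_def IJ by (rule product_nn_integral_insert[OF J hm, symmetric])
  finally show ?thesis .
qed

lemma sum_param_swap:
  assumes "i < N - 1"
  shows "(\<Sum>j<N - 1. param_swap N i y j) = - y i"
proof -
  have split: "sum g {..<N - 1} = g i + sum g ({..<N - 1} - {i})" for g :: "nat \<Rightarrow> real"
    using assms by (intro sum.remove) auto
  have "sum (param_swap N i y) ({..<N - 1} - {i}) = sum y ({..<N - 1} - {i})"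
    unfolding param_swap_def by (intro sum.cong) auto
  moreover have "param_swap N i y i = - sum y {..<N - 1}"
    by (simp add: param_swap_def)
  ultimately show ?thesis
    using split[of "param_swap N i y"] split[of y] by linarith
qed

lemma hyp_param_param_swap:
  assumes "i < N - 1"
  shows "hyp_param N (param_swap N i y) = (\<lambda>j. if j = i then hyp_param N y (N - 1)
           else if j = N - 1 then hyp_param N y i else hyp_param N y j)"
  using assms sum_param_swap[OF assms]
  by (auto simp: fun_eq_iff hyp_param_def param_swap_def)

lemma field_norm_param_swap:
  assumes "i < N - 1"
  shows "field_norm N (hyp_param N (param_swap N i y)) = field_norm N (hyp_param N y)"
proof -
  define s where "s j = (if j = i then N - 1 else if j = N - 1 then i else j)" for j
  have "(\<Sum>j<N. (hyp_param N (param_swap N i y) j)\<^sup>2) = (\<Sum>j<N. (hyp_param N y (s j))\<^sup>2)"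
    unfolding hyp_param_param_swap[OF assms] s_def by (intro sum.cong) auto
  also have "\<dots> = (\<Sum>j<N. (hyp_param N y j)\<^sup>2)"
    by (rule sum.reindex_bij_witness[of _ s s]) (use assms in \<open>auto simp: s_def\<close>)
  finally show ?thesis unfolding field_norm_def by simp
qed

lemma param_swap_mem_param_ball_iff:
  assumes i: "i < N - 1" and y: "y \<in> space (param_space N)"
  shows "param_swap N i y \<in> param_ball N \<longleftrightarrow> y \<in> param_ball N"
  using measurable_space[OF param_swap_measurable[OF i] y] y field_norm_param_swap[OF i, of y]
  unfolding param_ball_def by auto

definition hyp_dir :: "nat \<Rightarrow> (nat \<Rightarrow> real) \<Rightarrow> nat \<Rightarrow> real" where
  "hyp_dir N y j = hyp_param N y j / field_norm N (hyp_param N y)"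

lemma hyp_dir_measurable [measurable]: "(\<lambda>y. hyp_dir N y j) \<in> borel_measurable (param_space N)"
  unfolding hyp_dir_def by measurable

lemma sum_hyp_dir_sq_le_1: "(\<Sum>j<N. (hyp_dir N y j)\<^sup>2) \<le> 1"
proof -
  define S where "S = (\<Sum>j<N. (hyp_param N y j)\<^sup>2)"
  have "S \<ge> 0" unfolding S_def by (intro sum_nonneg) auto
  moreover have "(\<Sum>j<N. (hyp_dir N y j)\<^sup>2) = S / (sqrt S)\<^sup>2"
    unfolding hyp_dir_def field_norm_def S_def[symmetric]
    by (simp add: power_divide sum_divide_distrib S_def)
  ultimately show ?thesis by (cases "S = 0") auto
qed

lemma abs_hyp_dir_le_1:
  assumes "j < N"
  shows "\<bar>hyp_dir N y j\<bar> \<le> 1"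
proof -
  have "(hyp_dir N y j)\<^sup>2 \<le> (\<Sum>j<N. (hyp_dir N y j)\<^sup>2)"
    using assms by (intro member_le_sum) auto
  then have "(hyp_dir N y j)\<^sup>2 \<le> 1"
    using sum_hyp_dir_sq_le_1 by (rule order_trans)
  then show ?thesis by (simp add: abs_square_le_1)
qed

lemma hyp_dir_param_swap:
  assumes "i < N - 1"
  shows "hyp_dir N (param_swap N i y) (N - 1) = hyp_dir N y i"
  using assms unfolding hyp_dir_def field_norm_param_swap[OF assms]
  by (simp add: hyp_param_param_swap[OF assms])

lemma integral_param_ball_hyp_dir_sq_swap:
  assumes i: "i < N - 1"
  shows "(\<integral>y. indicator (param_ball N) y * (hyp_dir N y i)\<^sup>2 \<partial>param_space N)
       = (\<integral>y. indicator (param_ball N) y * (hyp_dir N y (N - 1))\<^sup>2 \<partial>param_space N)"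
proof -
  have nn: "(\<integral>y. indicator (param_ball N) y * (hyp_dir N y j)\<^sup>2 \<partial>param_space N)
      = enn2real (\<integral>\<^sup>+y. ennreal (indicator (param_ball N) y * (hyp_dir N y j)\<^sup>2) \<partial>param_space N)" for j
    by (rule integral_eq_nn_integral) auto
  have "(\<integral>\<^sup>+y. ennreal (indicator (param_ball N) y * (hyp_dir N y i)\<^sup>2) \<partial>param_space N)
      = (\<integral>\<^sup>+y. ennreal (indicator (param_ball N) (param_swap N i y)
                 * (hyp_dir N (param_swap N i y) (N - 1))\<^sup>2) \<partial>param_space N)"
    by (rule nn_integral_cong)
      (simp add: hyp_dir_param_swap[OF i, simplified] param_swap_mem_param_ball_iff[OF i] indicator_def)
  also have "\<dots> = (\<integral>\<^sup>+y. ennreal (indicator (param_ball N) y * (hyp_dir N y (N - 1))\<^sup>2) \<partial>param_space N)"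
    by (rule nn_integral_param_swap[OF i]) auto
  finally show ?thesis unfolding nn by simp
qed

lemma sum_integral_param_ball_hyp_dir_sq_le:
  assumes fin: "emeasure (param_space N) (param_ball N) < \<infinity>"
  shows "(\<Sum>j<N. \<integral>y. indicator (param_ball N) y * (hyp_dir N y j)\<^sup>2 \<partial>param_space N)
           \<le> measure (param_space N) (param_ball N)"
proof -
  have int: "integrable (param_space N) (\<lambda>y. indicator (param_ball N) y * (hyp_dir N y j)\<^sup>2)"
    if "j < N" for j
    using abs_hyp_dir_le_1[OF that]
    by (intro integrable_param_ball_bounded[OF fin, where c=1]) (auto simp: abs_square_le_1)
  have "(\<Sum>j<N. \<integral>y. indicator (param_ball N) y * (hyp_dir N y j)\<^sup>2 \<partial>param_space N)
      = (\<integral>y. indicator (param_ball N) y * (\<Sum>j<N. (hyp_dir N y j)\<^sup>2) \<partial>param_space N)"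
    unfolding sum_distrib_left
    by (rule Bochner_Integration.integral_sum[symmetric]) (use int in simp)
  also have "\<dots> \<le> (\<integral>y. indicator (param_ball N) y \<partial>param_space N)"
  proof (rule integral_mono)
    show "integrable (param_space N) (\<lambda>y. indicator (param_ball N) y * (\<Sum>j<N. (hyp_dir N y j)\<^sup>2))"
      unfolding sum_distrib_left
      by (rule Bochner_Integration.integrable_sum) (use int in simp)
    show "integrable (param_space N) (indicator (param_ball N) :: _ \<Rightarrow> real)"
      using fin by (intro integrable_real_indicator) auto
  qed (use sum_hyp_dir_sq_le_1 in \<open>simp add: indicator_def\<close>)
  finally show ?thesis by (simp add: integral_indicator_param_ball)
qed

text \<open>By exchangeability of the coordinates each of the \<open>N\<close> second moments is at most a
  fraction \<open>1/N\<close> of their sum.\<close>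
lemma integral_param_ball_hyp_dir_sq_le:
  assumes fin: "emeasure (param_space N) (param_ball N) < \<infinity>" and j: "j < N"
  shows "(\<integral>y. indicator (param_ball N) y * (hyp_dir N y j)\<^sup>2 \<partial>param_space N)
           \<le> measure (param_space N) (param_ball N) / N"
proof -
  define M where "M j = (\<integral>y. indicator (param_ball N) y * (hyp_dir N y j)\<^sup>2 \<partial>param_space N)" for j
  have last: "M i = M (N - 1)" if "i < N" for i
  proof (cases "i < N - 1")
    case True
    then show ?thesis unfolding M_def by (rule integral_param_ball_hyp_dir_sq_swap)
  next
    case False
    with that have "i = N - 1" by linarith
    then show ?thesis by simp
  qed
  have "(\<Sum>i<N. M i) = (\<Sum>i<N. M (N - 1))"
    by (intro sum.cong refl last) simp
  then have "real N * M (N - 1) = (\<Sum>i<N. M i)"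
    by simp
  also have "\<dots> \<le> measure (param_space N) (param_ball N)"
    unfolding M_def by (rule sum_integral_param_ball_hyp_dir_sq_le[OF fin])
  finally show ?thesis
    using j last[OF j] unfolding M_def[symmetric] by (simp add: field_simps)
qed

lemma integral_param_ball_abs_hyp_dir_le:
  assumes fin: "emeasure (param_space N) (param_ball N) < \<infinity>" and j: "j < N"
  shows "(\<integral>y. indicator (param_ball N) y * \<bar>hyp_dir N y j\<bar> \<partial>param_space N)
           \<le> measure (param_space N) (param_ball N) / sqrt N"
proof -
  let ?P = "param_space N" and ?B = "param_ball N"
  have sN: "sqrt N > 0" using j by auto
  have amgm: "\<bar>t\<bar> \<le> sqrt N / 2 * t\<^sup>2 + 1 / (2 * sqrt N)" for t :: real
  proof -
    have "0 \<le> (sqrt N * \<bar>t\<bar> - 1)\<^sup>2 / (2 * sqrt N)" by simp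
    also have "\<dots> = sqrt N / 2 * t\<^sup>2 + 1 / (2 * sqrt N) - \<bar>t\<bar>"
      using sN by (simp add: field_simps power2_eq_square)
    finally show ?thesis by simp
  qed
  have int_abs: "integrable ?P (\<lambda>y. indicator ?B y * \<bar>hyp_dir N y j\<bar>)"
    using abs_hyp_dir_le_1[OF j] by (intro integrable_param_ball_bounded[OF fin, where c=1]) auto
  have int_sq: "integrable ?P (\<lambda>y. indicator ?B y * (hyp_dir N y j)\<^sup>2)"
    using abs_hyp_dir_le_1[OF j]
    by (intro integrable_param_ball_bounded[OF fin, where c=1]) (auto simp: abs_square_le_1)
  have int_ind: "integrable ?P (indicator ?B :: _ \<Rightarrow> real)"
    using fin by (intro integrable_real_indicator) auto
  have "(\<integral>y. indicator ?B y * \<bar>hyp_dir N y j\<bar> \<partial>?P)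
      \<le> (\<integral>y. sqrt N / 2 * (indicator ?B y * (hyp_dir N y j)\<^sup>2) + 1 / (2 * sqrt N) * indicator ?B y \<partial>?P)"
  proof (rule integral_mono)
    fix y
    show "indicator ?B y * \<bar>hyp_dir N y j\<bar>
        \<le> sqrt N / 2 * (indicator ?B y * (hyp_dir N y j)\<^sup>2) + 1 / (2 * sqrt N) * indicator ?B y"
      using amgm[of "hyp_dir N y j"] by (cases "y \<in> ?B") simp_all
  qed (use int_abs int_sq int_ind in auto)
  also have "\<dots> = sqrt N / 2 * (\<integral>y. indicator ?B y * (hyp_dir N y j)\<^sup>2 \<partial>?P) + measure ?P ?B / (2 * sqrt N)"
    using int_sq int_ind by (simp add: integral_indicator_param_ball)
  also have "\<dots> \<le> sqrt N / 2 * (measure ?P ?B / N) + measure ?P ?B / (2 * sqrt N)"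
    using integral_param_ball_hyp_dir_sq_le[OF fin j] sN by (intro add_right_mono mult_left_mono) auto
  also have "\<dots> = measure ?P ?B / sqrt N"
  proof -
    have "real N = sqrt N * sqrt N" by simp
    then show ?thesis using sN by (simp add: field_simps)
  qed
  finally show ?thesis .
qed

section \<open>Lipschitz dependence on the magnetisation\<close>

lemma mc_point_eq_hyp_dir:
  "i < N \<Longrightarrow> mc_point N m \<rho> y i = m + sqrt N * sqrt (\<rho> - m\<^sup>2) * hyp_dir N y i"
  unfolding mc_point_def hyp_dir_def by (simp add: real_sqrt_mult)

lemma mc_point_measurable [measurable]:
  "(\<lambda>y. mc_point N m \<rho> y i) \<in> borel_measurable (param_space N)"
  unfolding mc_point_def field_norm_def by measurable

lemma restrict_to_mc_point_measurable:
  "(\<lambda>y. restrict_to \<iota> (mc_point N m \<rho> y)) \<in> borel_measurable (param_space N)"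
  unfolding restrict_to_def
  by (subst borel_measurable_euclidean_space) (auto simp: Basis_vec_def inner_axis)

lemma f_restrict_to_mc_point_diff_le:
  fixes f :: "real ^ 'k::finite \<Rightarrow> real" and \<iota> :: "'k \<Rightarrow> nat" and m1 m2 \<rho> :: real
  assumes lip: "1-lipschitz_on UNIV f" and \<iota>: "\<forall>j. \<iota> j < N"
  shows "\<bar>f (restrict_to \<iota> (mc_point N m1 \<rho> y)) - f (restrict_to \<iota> (mc_point N m2 \<rho> y))\<bar>
     \<le> CARD('k) * \<bar>m1 - m2\<bar>
        + sqrt N * \<bar>sqrt (\<rho> - m1\<^sup>2) - sqrt (\<rho> - m2\<^sup>2)\<bar> * (\<Sum>j\<in>UNIV. \<bar>hyp_dir N y (\<iota> j)\<bar>)"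
proof -
  let ?v1 = "restrict_to \<iota> (mc_point N m1 \<rho> y)" and ?v2 = "restrict_to \<iota> (mc_point N m2 \<rho> y)"
  let ?D = "\<bar>sqrt (\<rho> - m1\<^sup>2) - sqrt (\<rho> - m2\<^sup>2)\<bar>"
  have "(?v1 - ?v2) $ j = (m1 - m2) + sqrt N * (sqrt (\<rho> - m1\<^sup>2) - sqrt (\<rho> - m2\<^sup>2)) * hyp_dir N y (\<iota> j)"
    for j
    using \<iota> by (simp add: restrict_to_def mc_point_eq_hyp_dir algebra_simps)
  then have "\<bar>(?v1 - ?v2) $ j\<bar> \<le> \<bar>m1 - m2\<bar> + sqrt N * ?D * \<bar>hyp_dir N y (\<iota> j)\<bar>" for j
    by (simp add: abs_mult order.trans[OF abs_triangle_ineq])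
  then have "(\<Sum>j\<in>UNIV. \<bar>(?v1 - ?v2) $ j\<bar>) \<le> (\<Sum>j\<in>UNIV. \<bar>m1 - m2\<bar> + sqrt N * ?D * \<bar>hyp_dir N y (\<iota> j)\<bar>)"
    by (rule sum_mono)
  moreover have "\<bar>f ?v1 - f ?v2\<bar> \<le> norm (?v1 - ?v2)"
    using lipschitz_onD[OF lip, of ?v1 ?v2] by (simp add: dist_real_def dist_norm)
  ultimately show ?thesis
    using norm_le_l1_cart[of "?v1 - ?v2"] by (simp add: sum.distrib sum_distrib_left)
qed

lemma integral_param_ball_sum_abs_hyp_dir_le:
  fixes \<iota> :: "'k::finite \<Rightarrow> nat"
  assumes fin: "emeasure (param_space N) (param_ball N) < \<infinity>" and \<iota>: "\<forall>j. \<iota> j < N"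
  shows "integrable (param_space N) (\<lambda>y. indicator (param_ball N) y * (\<Sum>j\<in>UNIV. \<bar>hyp_dir N y (\<iota> j)\<bar>))"
    and "(\<integral>y. indicator (param_ball N) y * (\<Sum>j\<in>UNIV. \<bar>hyp_dir N y (\<iota> j)\<bar>) \<partial>param_space N)
           \<le> CARD('k) * measure (param_space N) (param_ball N) / sqrt N"
proof -
  have int: "integrable (param_space N) (\<lambda>y. indicator (param_ball N) y * \<bar>hyp_dir N y (\<iota> j)\<bar>)" for j
    using abs_hyp_dir_le_1 \<iota> by (intro integrable_param_ball_bounded[OF fin, where c=1]) auto
  then show "integrable (param_space N) (\<lambda>y. indicator (param_ball N) y * (\<Sum>j\<in>UNIV. \<bar>hyp_dir N y (\<iota> j)\<bar>))"
    unfolding sum_distrib_left by (intro Bochner_Integration.integrable_sum)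
  have "(\<integral>y. indicator (param_ball N) y * (\<Sum>j\<in>UNIV. \<bar>hyp_dir N y (\<iota> j)\<bar>) \<partial>param_space N)
      = (\<Sum>j\<in>UNIV. \<integral>y. indicator (param_ball N) y * \<bar>hyp_dir N y (\<iota> j)\<bar> \<partial>param_space N)"
    unfolding sum_distrib_left using int by (intro Bochner_Integration.integral_sum)
  also have "\<dots> \<le> (\<Sum>j\<in>(UNIV :: 'k set). measure (param_space N) (param_ball N) / sqrt N)"
    using integral_param_ball_abs_hyp_dir_le[OF fin] \<iota> by (intro sum_mono) auto
  finally show "(\<integral>y. indicator (param_ball N) y * (\<Sum>j\<in>UNIV. \<bar>hyp_dir N y (\<iota> j)\<bar>) \<partial>param_space N)
      \<le> CARD('k) * measure (param_space N) (param_ball N) / sqrt N"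
    by simp
qed

lemma integral_param_ball_mc_point_diff_le:
  fixes f :: "real ^ 'k::finite \<Rightarrow> real" and \<iota> :: "'k \<Rightarrow> nat" and m1 m2 \<rho> :: real
  assumes fin: "emeasure (param_space N) (param_ball N) < \<infinity>"
    and bounded: "\<And>v. \<bar>f v\<bar> \<le> B" and lip: "1-lipschitz_on UNIV f" and \<iota>: "\<forall>j. \<iota> j < N"
  shows "\<bar>(\<integral>y. indicator (param_ball N) y * f (restrict_to \<iota> (mc_point N m1 \<rho> y)) \<partial>param_space N)
          - (\<integral>y. indicator (param_ball N) y * f (restrict_to \<iota> (mc_point N m2 \<rho> y)) \<partial>param_space N)\<bar>
     \<le> (CARD('k) * \<bar>m1 - m2\<bar> + CARD('k) * \<bar>sqrt (\<rho> - m1\<^sup>2) - sqrt (\<rho> - m2\<^sup>2)\<bar>)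
        * measure (param_space N) (param_ball N)"
proof -
  let ?P = "param_space N" and ?B = "param_ball N" and ?k = "real CARD('k)"
  let ?D = "\<bar>sqrt (\<rho> - m1\<^sup>2) - sqrt (\<rho> - m2\<^sup>2)\<bar>"
  let ?S = "\<lambda>y. indicator ?B y * (\<Sum>j\<in>UNIV. \<bar>hyp_dir N y (\<iota> j)\<bar>)"
  define F where "F m y = indicator ?B y * f (restrict_to \<iota> (mc_point N m \<rho> y))" for m y
  define G where "G y = ?k * \<bar>m1 - m2\<bar> * indicator ?B y + sqrt N * ?D * ?S y" for y
  have N: "N > 0"
    using \<iota> by (metis gr0I not_less0)
  have "f \<in> borel_measurable borel"
    using lipschitz_on_continuous_on[OF lip] by (rule borel_measurable_continuous_onI)
  from measurable_comp[OF restrict_to_mc_point_measurable this]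
  have int_F: "integrable ?P (F m)" for m
    unfolding F_def using bounded
    by (intro integrable_param_ball_bounded[OF fin, where c=B]) (auto simp: o_def)
  have int_ind: "integrable ?P (indicator ?B :: _ \<Rightarrow> real)"
    using fin by (intro integrable_real_indicator) auto
  note S = integral_param_ball_sum_abs_hyp_dir_le[OF fin \<iota>]
  have FG: "\<bar>F m1 y - F m2 y\<bar> \<le> G y" for y
    using f_restrict_to_mc_point_diff_le[OF lip \<iota>, of m1 \<rho> y m2]
    by (cases "y \<in> ?B") (simp_all add: F_def G_def)
  have "\<bar>(\<integral>y. F m1 y \<partial>?P) - (\<integral>y. F m2 y \<partial>?P)\<bar> \<le> (\<integral>y. \<bar>F m1 y - F m2 y\<bar> \<partial>?P)"
    using integral_norm_bound[of ?P "\<lambda>y. F m1 y - F m2 y"] int_F by simp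
  also have "\<dots> \<le> (\<integral>y. G y \<partial>?P)"
    unfolding G_def using FG int_F int_ind S(1) by (intro integral_mono) (auto simp: G_def)
  also have "\<dots> = ?k * \<bar>m1 - m2\<bar> * measure ?P ?B + sqrt N * ?D * (\<integral>y. ?S y \<partial>?P)"
    unfolding G_def using int_ind S(1) by (simp add: integral_indicator_param_ball)
  also have "\<dots> \<le> ?k * \<bar>m1 - m2\<bar> * measure ?P ?B + sqrt N * ?D * (?k * measure ?P ?B / sqrt N)"
    using S(2) by (intro add_left_mono mult_left_mono) auto
  also have "\<dots> = (?k * \<bar>m1 - m2\<bar> + ?k * ?D) * measure ?P ?B"
    using N by (simp add: field_simps)
  finally show ?thesis
    unfolding F_def .
qed

text \<open>Junk values: \<open>measure\<close> is \<open>0\<close> on sets of infinite measure, so both expectations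
  vanish unless the ball has finite positive measure.\<close>
lemma mc_expect_lipschitz:
  fixes f :: "real ^ 'k::finite \<Rightarrow> real" and \<iota> :: "'k \<Rightarrow> nat" and m1 m2 \<rho> :: real
  assumes "\<And>v. \<bar>f v\<bar> \<le> B" and "1-lipschitz_on UNIV f" and "\<forall>j. \<iota> j < N"
  shows "\<bar>mc_expect N m1 \<rho> (f \<circ> restrict_to \<iota>) - mc_expect N m2 \<rho> (f \<circ> restrict_to \<iota>)\<bar>
     \<le> CARD('k) * \<bar>m1 - m2\<bar> + CARD('k) * \<bar>sqrt (\<rho> - m1\<^sup>2) - sqrt (\<rho> - m2\<^sup>2)\<bar>"
proof (cases "measure (param_space N) (param_ball N) = 0")
  case True
  then show ?thesis by (simp add: mc_expect_def)
next
  case False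
  then have fin: "emeasure (param_space N) (param_ball N) < \<infinity>"
    using measure_zero_top by (metis infinity_ennreal_def less_top)
  have pos: "measure (param_space N) (param_ball N) > 0"
    using False by (simp add: zero_less_measure_iff)
  from integral_param_ball_mc_point_diff_le[OF fin assms, of m1 \<rho> m2] pos show ?thesis
    unfolding mc_expect_def set_lebesgue_integral_def
    by (simp add: abs_divide pos_divide_le_eq flip: diff_divide_distrib)
qed

lemma continuous_on_mc_expect:
  fixes f :: "real ^ 'k::finite \<Rightarrow> real" and \<iota> :: "'k \<Rightarrow> nat" and \<rho> :: real
  assumes "\<And>v. \<bar>f v\<bar> \<le> B" and "1-lipschitz_on UNIV f" and "\<forall>j. \<iota> j < N"
  shows "continuous_on UNIV (\<lambda>m. mc_expect N m \<rho> (f \<circ> restrict_to \<iota>))"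
proof (rule continuous_at_imp_continuous_on, intro ballI)
  fix m2 :: real
  let ?g = "\<lambda>m. mc_expect N m \<rho> (f \<circ> restrict_to \<iota>)" and ?k = "real CARD('k)"
  let ?bound = "\<lambda>m1. ?k * \<bar>m1 - m2\<bar> + ?k * \<bar>sqrt (\<rho> - m1\<^sup>2) - sqrt (\<rho> - m2\<^sup>2)\<bar>"
  have "(?bound \<longlongrightarrow> ?bound m2) (at m2)"
    by (intro tendsto_intros)
  then have lim: "(?bound \<longlongrightarrow> 0) (at m2)"
    by simp
  have "norm (?g m1 - ?g m2) \<le> ?bound m1" for m1
    using mc_expect_lipschitz[OF assms, of m1 \<rho> m2] by simp
  then have "((\<lambda>m1. ?g m1 - ?g m2) \<longlongrightarrow> 0) (at m2)"
    by (intro Lim_null_comparison[OF always_eventually lim] allI)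
  then show "isCont ?g m2"
    unfolding isCont_def by (simp add: LIM_zero_iff)
qed

lemma abs_sq_diff_le:
  fixes x y r :: real
  assumes "\<bar>x\<bar> \<le> r" and "\<bar>y\<bar> \<le> r"
  shows "\<bar>x\<^sup>2 - y\<^sup>2\<bar> \<le> 2 * r * \<bar>x - y\<bar>"
proof -
  have "\<bar>x\<^sup>2 - y\<^sup>2\<bar> = \<bar>x - y\<bar> * \<bar>x + y\<bar>"
    by (simp add: power2_eq_square abs_mult[symmetric] algebra_simps)
  also have "\<dots> \<le> \<bar>x - y\<bar> * (2 * r)"
    using assms by (intro mult_left_mono) auto
  finally show ?thesis
    by (simp add: ac_simps)
qed

lemma abs_sqrt_diff_le:
  fixes p q :: real
  assumes "p \<ge> 0" and "q > 0"
  shows "\<bar>sqrt p - sqrt q\<bar> \<le> \<bar>p - q\<bar> / sqrt q"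
proof -
  have "(sqrt p - sqrt q) * (sqrt p + sqrt q) = p - q"
    using assms by (simp add: algebra_simps)
  then have "\<bar>p - q\<bar> = \<bar>sqrt p - sqrt q\<bar> * (sqrt p + sqrt q)"
    using assms by (metis abs_mult abs_of_nonneg add_nonneg_nonneg real_sqrt_ge_zero less_imp_le)
  also have "\<dots> \<ge> \<bar>sqrt p - sqrt q\<bar> * sqrt q"
    using assms by (intro mult_left_mono) auto
  finally show ?thesis
    using assms by (simp add: pos_le_divide_eq)
qed

lemma mc_expect_dist_le:
  fixes f :: "real ^ 'k::finite \<Rightarrow> real" and \<iota> :: "'k \<Rightarrow> nat" and \<rho> m x :: real
  assumes "\<And>v. \<bar>f v\<bar> \<le> B" and "1-lipschitz_on UNIV f" and "\<forall>j. \<iota> j < N"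
    and m: "\<rho> - m\<^sup>2 > 0" "\<bar>m\<bar> \<le> sqrt \<rho>" and x: "\<bar>x\<bar> \<le> sqrt \<rho>"
  shows "\<bar>mc_expect N x \<rho> (f \<circ> restrict_to \<iota>) - mc_expect N m \<rho> (f \<circ> restrict_to \<iota>)\<bar>
     \<le> CARD('k) * (1 + 2 * sqrt \<rho> / sqrt (\<rho> - m\<^sup>2)) * \<bar>x - m\<bar>"
proof -
  have "0 \<le> \<rho>"
    using m(1) zero_le_power2[of m] by linarith
  then have "x\<^sup>2 \<le> \<rho>"
    using power_mono[OF x abs_ge_zero, of 2] by simp
  have diff: "\<bar>(\<rho> - x\<^sup>2) - (\<rho> - m\<^sup>2)\<bar> \<le> 2 * sqrt \<rho> * \<bar>x - m\<bar>"
    using abs_sq_diff_le[OF x m(2)] by (simp add: abs_minus_commute)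
  have "\<bar>sqrt (\<rho> - x\<^sup>2) - sqrt (\<rho> - m\<^sup>2)\<bar> \<le> \<bar>(\<rho> - x\<^sup>2) - (\<rho> - m\<^sup>2)\<bar> / sqrt (\<rho> - m\<^sup>2)"
    using \<open>x\<^sup>2 \<le> \<rho>\<close> m(1) by (intro abs_sqrt_diff_le) simp_all
  also have "\<dots> \<le> 2 * sqrt \<rho> * \<bar>x - m\<bar> / sqrt (\<rho> - m\<^sup>2)"
    using m(1) by (intro divide_right_mono[OF diff]) simp
  also have "\<dots> = 2 * sqrt \<rho> / sqrt (\<rho> - m\<^sup>2) * \<bar>x - m\<bar>"
    by simp
  finally have "\<bar>sqrt (\<rho> - x\<^sup>2) - sqrt (\<rho> - m\<^sup>2)\<bar> \<le> 2 * sqrt \<rho> / sqrt (\<rho> - m\<^sup>2) * \<bar>x - m\<bar>" .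
  then have "CARD('k) * \<bar>sqrt (\<rho> - x\<^sup>2) - sqrt (\<rho> - m\<^sup>2)\<bar>
      \<le> CARD('k) * (2 * sqrt \<rho> / sqrt (\<rho> - m\<^sup>2) * \<bar>x - m\<bar>)"
    by (rule mult_left_mono) simp
  with mc_expect_lipschitz[OF assms(1-3), of x \<rho> m] show ?thesis
    by (simp add: algebra_simps)
qed

section \<open>Weighted averages on an interval\<close>

lemma integral_abs_gaussian_moment_le:
  fixes c x0 lo hi :: real
  assumes c: "c > 0" and "lo \<le> x0" and "x0 \<le> hi"
  shows "integral {lo..hi} (\<lambda>x. \<bar>x - x0\<bar> * exp (- c * (x - x0)\<^sup>2)) \<le> 1 / c"
proof -
  let ?g = "\<lambda>x. \<bar>x - x0\<bar> * exp (- c * (x - x0)\<^sup>2)"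
  let ?G = "\<lambda>x. exp (- c * (x - x0)\<^sup>2) / (2 * c)"
  have ftc: "(g has_integral (G b - G a)) {a..b}"
    if "a \<le> b" and "\<And>x. (G has_real_derivative g x) (at x)" for G g :: "real \<Rightarrow> real" and a b
    using that by (intro fundamental_theorem_of_calculus)
      (auto simp: has_real_derivative_iff_has_vector_derivative[symmetric] intro: has_field_derivative_at_within)
  have "((\<lambda>x. - ?G x) has_real_derivative (x - x0) * exp (- c * (x - x0)\<^sup>2)) (at x)" for x
    using c by (auto intro!: derivative_eq_intros simp: field_simps power2_eq_square)
  from ftc[OF \<open>x0 \<le> hi\<close> this] have right: "integral {x0..hi} ?g = ?G x0 - ?G hi"
    by (subst integral_cong[where g = "\<lambda>x. (x - x0) * exp (- c * (x - x0)\<^sup>2)"])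
      (auto dest: integral_unique)
  have "(?G has_real_derivative (x0 - x) * exp (- c * (x - x0)\<^sup>2)) (at x)" for x
    using c by (auto intro!: derivative_eq_intros simp: field_simps power2_eq_square)
  from ftc[OF \<open>lo \<le> x0\<close> this] have left: "integral {lo..x0} ?g = ?G x0 - ?G lo"
    by (subst integral_cong[where g = "\<lambda>x. (x0 - x) * exp (- c * (x - x0)\<^sup>2)"])
      (auto dest: integral_unique)
  have "integral {lo..hi} ?g = integral {lo..x0} ?g + integral {x0..hi} ?g"
    using assms by (intro Henstock_Kurzweil_Integration.integral_combine[symmetric]
        integrable_continuous_interval continuous_intros) auto
  also have "\<dots> \<le> 1 / c"
    unfolding left right using c by (simp add: field_simps add_pos_pos)
  finally show ?thesis .
qed

lemma integral_ge_of_lower_bound_near: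
  fixes w :: "real \<Rightarrow> real"
  assumes w: "continuous_on {a..b} w" "\<And>x. x \<in> {a..b} \<Longrightarrow> 0 \<le> w x"
    and sub: "{c - h..c + h} \<subseteq> {a..b}" and "h \<ge> 0"
    and lower: "\<And>x. x \<in> {c - h..c + h} \<Longrightarrow> v \<le> w x"
  shows "2 * h * v \<le> integral {a..b} w"
proof -
  have int: "w integrable_on {c - h..c + h}"
    using continuous_on_subset[OF w(1) sub] by (rule integrable_continuous_interval)
  have "2 * h * v = integral {c - h..c + h} (\<lambda>_. v)"
    using \<open>h \<ge> 0\<close> by simp
  also have "\<dots> \<le> integral {c - h..c + h} w"
    using int lower by (intro integral_le) auto
  also have "\<dots> \<le> integral {a..b} w"
    using w by (intro integral_subset_le[OF sub int] integrable_continuous_interval) auto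
  finally show ?thesis .
qed

lemma weighted_average_dist_le:
  fixes w g :: "real \<Rightarrow> real"
  assumes w: "continuous_on {a..b} w" "\<And>x. x \<in> {a..b} \<Longrightarrow> 0 \<le> w x"
    and g: "continuous_on {a..b} g" "\<And>x. x \<in> {a..b} \<Longrightarrow> \<bar>g x - g c\<bar> \<le> L * \<bar>x - c\<bar>"
    and pos: "integral {a..b} w > 0"
  shows "\<bar>integral {a..b} (\<lambda>x. w x * g x) / integral {a..b} w - g c\<bar>
           \<le> L * integral {a..b} (\<lambda>x. w x * \<bar>x - c\<bar>) / integral {a..b} w"
proof -
  let ?W = "integral {a..b} w"
  have "integral {a..b} (\<lambda>x. w x * (g x - g c)) = integral {a..b} (\<lambda>x. w x * g x) - ?W * g c"
    using w g by (simp add: right_diff_distrib integral_diff integrable_continuous_interval continuous_intros)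
  then have "integral {a..b} (\<lambda>x. w x * g x) / ?W - g c = integral {a..b} (\<lambda>x. w x * (g x - g c)) / ?W"
    using pos by (simp add: field_simps)
  moreover have "norm (integral {a..b} (\<lambda>x. w x * (g x - g c))) \<le> integral {a..b} (\<lambda>x. L * (w x * \<bar>x - c\<bar>))"
  proof (rule Henstock_Kurzweil_Integration.integral_norm_bound_integral)
    fix x assume x: "x \<in> {a..b}"
    have "norm (w x * (g x - g c)) = w x * \<bar>g x - g c\<bar>"
      using w(2)[OF x] by (simp add: abs_mult)
    also have "\<dots> \<le> w x * (L * \<bar>x - c\<bar>)"
      using w(2)[OF x] g(2)[OF x] by (rule mult_left_mono[rotated])
    finally show "norm (w x * (g x - g c)) \<le> L * (w x * \<bar>x - c\<bar>)"
      by (simp add: ac_simps)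
  qed (use w g in \<open>intro integrable_continuous_interval continuous_intros; simp\<close>)+
  ultimately show ?thesis
    using pos by (simp add: abs_divide divide_right_mono)
qed

lemma can_weight_nonneg: "can_weight N \<mu> \<rho> x \<ge> 0"
  unfolding can_weight_def by simp

lemma continuous_on_can_weight:
  assumes "N > 3"
  shows "continuous_on {- sqrt \<rho>..sqrt \<rho>} (can_weight N \<mu> \<rho>)"
proof -
  have "x\<^sup>2 \<le> \<rho>" if "x \<in> {- sqrt \<rho>..sqrt \<rho>}" for x
  proof -
    from that have x: "\<bar>x\<bar> \<le> sqrt \<rho>" by auto
    then have "0 \<le> \<rho>"
      using abs_ge_zero[of x] by (metis order.trans real_sqrt_ge_0_iff)
    with x show ?thesis
      using power_mono[of "\<bar>x\<bar>" "sqrt \<rho>" 2] by simp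
  qed
  then have powr: "continuous_on {- sqrt \<rho>..sqrt \<rho>} (\<lambda>x. (\<rho> - x\<^sup>2) powr ((real N - 3) / 2))"
    using assms by (intro continuous_on_powr' continuous_intros) auto
  show ?thesis
    unfolding can_weight_def by (intro continuous_on_mult[OF _ powr] continuous_intros)
qed

lemma can_expect_eq_integral:
  assumes "N > 3" and "\<rho> \<ge> 0" and "continuous_on {- sqrt \<rho>..sqrt \<rho>} (\<lambda>x. mc_expect N x \<rho> F)"
  shows "can_expect N \<mu> \<rho> F = integral {- sqrt \<rho>..sqrt \<rho>} (\<lambda>x. can_weight N \<mu> \<rho> x * mc_expect N x \<rho> F)
                                 / integral {- sqrt \<rho>..sqrt \<rho>} (can_weight N \<mu> \<rho>)"
proof -
  have le: "- sqrt \<rho> \<le> sqrt \<rho>" using assms(2) by simp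
  have w: "continuous_on {- sqrt \<rho>..sqrt \<rho>} (can_weight N \<mu> \<rho>)"
    using assms(1) by (rule continuous_on_can_weight)
  show ?thesis
    unfolding can_expect_def using w assms(3)
    by (simp add: interval_integral_eq_integral[OF le] borel_integrable_atLeastAtMost' continuous_on_mult)
qed

lemma mc_expect_can_expect_dist_le:
  fixes f :: "real ^ 'k::finite \<Rightarrow> real" and \<iota> :: "'k \<Rightarrow> nat" and \<rho> m :: real
  assumes B: "\<And>v. \<bar>f v\<bar> \<le> B" and lip: "1-lipschitz_on UNIV f" and \<iota>: "\<forall>j. \<iota> j < N"
    and "\<rho> > 0" and "\<bar>m\<bar> < sqrt \<rho>" and "\<rho> - m\<^sup>2 > 0" and "N > 3"
    and W: "integral {- sqrt \<rho>..sqrt \<rho>} (can_weight N \<mu> \<rho>) > 0"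
  shows "\<bar>mc_expect N m \<rho> (f \<circ> restrict_to \<iota>) - can_expect N \<mu> \<rho> (f \<circ> restrict_to \<iota>)\<bar>
    \<le> CARD('k) * (1 + 2 * sqrt \<rho> / sqrt (\<rho> - m\<^sup>2))
       * integral {- sqrt \<rho>..sqrt \<rho>} (\<lambda>x. can_weight N \<mu> \<rho> x * \<bar>x - m\<bar>)
       / integral {- sqrt \<rho>..sqrt \<rho>} (can_weight N \<mu> \<rho>)"
proof -
  let ?I = "{- sqrt \<rho>..sqrt \<rho>}" and ?w = "can_weight N \<mu> \<rho>"
  let ?g = "\<lambda>x. mc_expect N x \<rho> (f \<circ> restrict_to \<iota>)"
  have g: "continuous_on ?I ?g"
    using continuous_on_mc_expect[OF B lip \<iota>] by (rule continuous_on_subset) simp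
  have w: "continuous_on ?I ?w"
    using \<open>N > 3\<close> by (rule continuous_on_can_weight)
  have "can_expect N \<mu> \<rho> (f \<circ> restrict_to \<iota>) = integral ?I (\<lambda>x. ?w x * ?g x) / integral ?I ?w"
    using assms g by (intro can_expect_eq_integral) auto
  then have "\<bar>?g m - can_expect N \<mu> \<rho> (f \<circ> restrict_to \<iota>)\<bar>
      = \<bar>integral ?I (\<lambda>x. ?w x * ?g x) / integral ?I ?w - ?g m\<bar>"
    by (simp add: abs_minus_commute)
  also have "\<dots> \<le> CARD('k) * (1 + 2 * sqrt \<rho> / sqrt (\<rho> - m\<^sup>2))
      * integral ?I (\<lambda>x. ?w x * \<bar>x - m\<bar>) / integral ?I ?w"
  proof (rule weighted_average_dist_le[OF w can_weight_nonneg g _ W])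
    fix x assume "x \<in> ?I"
    then show "\<bar>?g x - ?g m\<bar> \<le> CARD('k) * (1 + 2 * sqrt \<rho> / sqrt (\<rho> - m\<^sup>2)) * \<bar>x - m\<bar>"
      using assms by (intro mc_expect_dist_le[OF B lip \<iota>]) auto
  qed
  finally show ?thesis .
qed

section \<open>Concentration of the canonical weight\<close>

lemma plus_ln_one_minus_ge:
  fixes s :: real
  assumes "\<bar>s\<bar> \<le> 1 / 2"
  shows "s + ln (1 - s) \<ge> - 2 * s\<^sup>2"
proof -
  have s1: "1 - s > 0" using assms by linarith
  have "ln (1 / (1 - s)) \<le> 1 / (1 - s) - 1"
    using s1 by (intro ln_le_minus_one) simp
  then have "s + ln (1 - s) \<ge> - (s\<^sup>2 / (1 - s))"
    using s1 by (simp add: ln_div field_simps power2_eq_square)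
  moreover have "s\<^sup>2 / (1 - s) \<le> s\<^sup>2 / (1 / 2)"
    using assms s1 by (intro divide_left_mono) auto
  ultimately show ?thesis by simp
qed

context
  fixes \<rho> m \<mu> :: real
  assumes rho_pos: "\<rho> > 0" and m_lt: "\<bar>m\<bar> < sqrt \<rho>" and mu_eq: "\<mu> = - m / (\<rho> - m\<^sup>2)"
begin

lemma rho_minus_m_sq_pos: "\<rho> - m\<^sup>2 > 0"
proof -
  have "m\<^sup>2 < (sqrt \<rho>)\<^sup>2"
    using m_lt by (metis abs_ge_zero power2_abs power_strict_mono zero_less_numeral)
  then show ?thesis using rho_pos by simp
qed

lemma sq_le_rho_of_abs_le: "\<bar>x\<bar> \<le> sqrt \<rho> \<Longrightarrow> x\<^sup>2 \<le> \<rho>"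
  using power_mono[of "\<bar>x\<bar>" "sqrt \<rho>" 2] rho_pos by simp

text \<open>\<open>log_weight_ratio (N - 3) x = ln (can_weight N \<mu> \<rho> x / can_weight N \<mu> \<rho> m)\<close>, written
  with \<open>s = (x\<^sup>2 - m\<^sup>2) / (\<rho> - m\<^sup>2)\<close>: the choice of \<open>\<mu>\<close> cancels the term linear in \<open>x - m\<close> up to
  the bounded remainder coming from the shift \<open>N - 3\<close>.\<close>
definition log_weight_ratio :: "real \<Rightarrow> real \<Rightarrow> real" where
  "log_weight_ratio n x =
     n / 2 * ((x\<^sup>2 - m\<^sup>2) / (\<rho> - m\<^sup>2) + ln (1 - (x\<^sup>2 - m\<^sup>2) / (\<rho> - m\<^sup>2)))
     - n * (x - m)\<^sup>2 / (2 * (\<rho> - m\<^sup>2)) + 3 * m * (x - m) / (\<rho> - m\<^sup>2)"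

lemma can_weight_eq_exp_log_weight_ratio:
  assumes x: "x\<^sup>2 < \<rho>" and N: "N \<ge> 3"
  shows "can_weight N \<mu> \<rho> x = can_weight N \<mu> \<rho> m * exp (log_weight_ratio (real N - 3) x)"
proof -
  define a where "a = \<rho> - m\<^sup>2"
  define n where "n = real N - 3"
  have a: "a > 0" unfolding a_def by (rule rho_minus_m_sq_pos)
  have rx: "\<rho> - x\<^sup>2 > 0" using x by simp
  have weight: "can_weight N \<mu> \<rho> y = exp (- \<mu> * real N * y + n / 2 * ln (\<rho> - y\<^sup>2))"
    if "\<rho> - y\<^sup>2 > 0" for y
    using that by (simp add: can_weight_def powr_def n_def exp_add[symmetric] algebra_simps)
  have "1 - (x\<^sup>2 - m\<^sup>2) / a = (\<rho> - x\<^sup>2) / a"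
    using a by (simp add: a_def field_simps)
  then have ln_eq: "ln (1 - (x\<^sup>2 - m\<^sup>2) / a) = ln (\<rho> - x\<^sup>2) - ln a"
    using a rx by (simp add: ln_div)
  have mu: "\<mu> = - m / a" unfolding a_def by (rule mu_eq)
  have lin: "n / 2 * ((x\<^sup>2 - m\<^sup>2) / a) - n * (x - m)\<^sup>2 / (2 * a) + 3 * m * (x - m) / a
      = - \<mu> * real N * (x - m)"
    using a unfolding mu n_def by (simp add: field_simps power2_eq_square)
  have "log_weight_ratio n x = - \<mu> * real N * (x - m) + n / 2 * (ln (\<rho> - x\<^sup>2) - ln a)"
    unfolding log_weight_ratio_def a_def[symmetric] lin[symmetric] ln_eq[symmetric]
    by (simp add: algebra_simps)
  then have "- \<mu> * real N * x + n / 2 * ln (\<rho> - x\<^sup>2)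
      = (- \<mu> * real N * m + n / 2 * ln (\<rho> - m\<^sup>2)) + log_weight_ratio n x"
    by (simp add: a_def algebra_simps)
  then show ?thesis
    using weight[OF rx] weight[OF rho_minus_m_sq_pos] by (simp add: n_def exp_add)
qed

lemma log_weight_ratio_le:
  assumes x: "x\<^sup>2 < \<rho>" and n: "n \<ge> 0"
  shows "log_weight_ratio n x \<le> - n * (x - m)\<^sup>2 / (2 * (\<rho> - m\<^sup>2)) + 6 * \<rho> / (\<rho> - m\<^sup>2)"
proof -
  define s where "s = (x\<^sup>2 - m\<^sup>2) / (\<rho> - m\<^sup>2)"
  have a: "\<rho> - m\<^sup>2 > 0" by (rule rho_minus_m_sq_pos)
  have "1 - s > 0" unfolding s_def using a x by (simp add: field_simps)
  then have "s + ln (1 - s) \<le> 0"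
    using ln_le_minus_one[of "1 - s"] by simp
  then have concave: "n / 2 * (s + ln (1 - s)) \<le> 0"
    using n by (simp add: mult_nonneg_nonpos)
  have xr: "\<bar>x\<bar> \<le> sqrt \<rho>"
    using real_sqrt_le_mono[of "x\<^sup>2" \<rho>] x by simp
  have "m * (x - m) \<le> \<bar>m\<bar> * \<bar>x - m\<bar>"
    by (metis abs_ge_self abs_mult)
  also have "\<dots> \<le> sqrt \<rho> * (2 * sqrt \<rho>)"
    using xr m_lt rho_pos by (intro mult_mono) auto
  also have "\<dots> = 2 * \<rho>"
    using rho_pos by simp
  finally have "3 * m * (x - m) \<le> 6 * \<rho>"
    by linarith
  then have "3 * m * (x - m) / (\<rho> - m\<^sup>2) \<le> 6 * \<rho> / (\<rho> - m\<^sup>2)"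
    using a by (simp add: divide_right_mono)
  with concave show ?thesis
    unfolding log_weight_ratio_def s_def[symmetric] by linarith
qed

lemma log_weight_ratio_nongaussian_ge:
  assumes x: "\<bar>x\<bar> \<le> sqrt \<rho>" and n: "n \<ge> 0" and d: "\<bar>x - m\<bar> \<le> (\<rho> - m\<^sup>2) / (4 * sqrt \<rho>)"
    and nd: "n * (x - m)\<^sup>2 \<le> 1"
  shows "n / 2 * ((x\<^sup>2 - m\<^sup>2) / (\<rho> - m\<^sup>2) + ln (1 - (x\<^sup>2 - m\<^sup>2) / (\<rho> - m\<^sup>2))) \<ge> - (4 * \<rho> / (\<rho> - m\<^sup>2)\<^sup>2)"
proof -
  define a where "a = \<rho> - m\<^sup>2"
  define s where "s = (x\<^sup>2 - m\<^sup>2) / a"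
  have a: "a > 0" unfolding a_def by (rule rho_minus_m_sq_pos)
  have sq: "\<bar>x\<^sup>2 - m\<^sup>2\<bar> \<le> 2 * sqrt \<rho> * \<bar>x - m\<bar>"
    using x m_lt by (intro abs_sq_diff_le) auto
  also have "\<dots> \<le> 2 * sqrt \<rho> * (a / (4 * sqrt \<rho>))"
    using d rho_pos unfolding a_def by (intro mult_left_mono) auto
  also have "\<dots> = a / 2" using rho_pos by simp
  finally have "\<bar>s\<bar> \<le> 1 / 2"
    unfolding s_def using a by (simp add: abs_divide field_simps)
  then have concave: "s + ln (1 - s) \<ge> - 2 * s\<^sup>2"
    by (rule plus_ln_one_minus_ge)
  have "(x\<^sup>2 - m\<^sup>2)\<^sup>2 \<le> (2 * sqrt \<rho> * \<bar>x - m\<bar>)\<^sup>2"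
    using power_mono[OF sq abs_ge_zero, of 2] by simp
  also have "\<dots> = (x - m)\<^sup>2 * (4 * \<rho>)"
    using rho_pos by (simp add: power_mult_distrib)
  finally have "s\<^sup>2 \<le> (x - m)\<^sup>2 * (4 * \<rho>) / a\<^sup>2"
    unfolding s_def power_divide by (rule divide_right_mono) simp
  then have "n * s\<^sup>2 \<le> n * ((x - m)\<^sup>2 * (4 * \<rho>) / a\<^sup>2)"
    using n by (intro mult_left_mono)
  moreover have "n / 2 * (- 2 * s\<^sup>2) \<le> n / 2 * (s + ln (1 - s))"
    using concave n by (intro mult_left_mono) auto
  moreover have "(n * (x - m)\<^sup>2) * (4 * \<rho> / a\<^sup>2) \<le> 1 * (4 * \<rho> / a\<^sup>2)"
    using nd rho_pos by (intro mult_right_mono) auto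
  ultimately have "n / 2 * (s + ln (1 - s)) \<ge> - (4 * \<rho> / a\<^sup>2)"
    by simp
  then show ?thesis
    by (simp add: s_def a_def)
qed

lemma log_weight_ratio_ge:
  assumes x: "\<bar>x\<bar> \<le> sqrt \<rho>" and n: "n \<ge> 0" and d1: "\<bar>x - m\<bar> \<le> 1"
    and d2: "\<bar>x - m\<bar> \<le> (\<rho> - m\<^sup>2) / (4 * sqrt \<rho>)" and nd: "n * (x - m)\<^sup>2 \<le> 1"
  shows "log_weight_ratio n x \<ge> - (4 * \<rho> / (\<rho> - m\<^sup>2)\<^sup>2 + 1 / (2 * (\<rho> - m\<^sup>2)) + 3 * sqrt \<rho> / (\<rho> - m\<^sup>2))"
proof -
  define a where "a = \<rho> - m\<^sup>2"
  have a: "a > 0" unfolding a_def by (rule rho_minus_m_sq_pos)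
  have gauss: "n * (x - m)\<^sup>2 / (2 * a) \<le> 1 / (2 * a)"
    using nd a by (simp add: divide_right_mono)
  have "\<bar>m * (x - m)\<bar> \<le> sqrt \<rho> * 1"
    unfolding abs_mult using m_lt d1 rho_pos by (intro mult_mono) auto
  then have "3 * m * (x - m) \<ge> - (3 * sqrt \<rho>)"
    by (simp add: abs_le_iff)
  then have shift: "3 * m * (x - m) / a \<ge> - (3 * sqrt \<rho> / a)"
    using a by (simp add: divide_right_mono field_simps)
  have "- (4 * \<rho> / a\<^sup>2 + 1 / (2 * a) + 3 * sqrt \<rho> / a) \<le> log_weight_ratio n x"
    using log_weight_ratio_nongaussian_ge[OF x n d2 nd] gauss shift
    unfolding log_weight_ratio_def a_def by linarith
  then show ?thesis
    by (simp add: a_def)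
qed

lemma can_weight_m_pos: "can_weight N \<mu> \<rho> m > 0"
  unfolding can_weight_def using rho_minus_m_sq_pos by simp

lemma can_weight_le_gaussian:
  assumes N: "N \<ge> 3" and x: "\<bar>x\<bar> \<le> sqrt \<rho>"
  shows "can_weight N \<mu> \<rho> x \<le> exp (6 * \<rho> / (\<rho> - m\<^sup>2)) * can_weight N \<mu> \<rho> m
           * exp (- ((real N - 3) / (2 * (\<rho> - m\<^sup>2))) * (x - m)\<^sup>2)"
proof (cases "x\<^sup>2 < \<rho>")
  case True
  have "- (real N - 3) * (x - m)\<^sup>2 / (2 * (\<rho> - m\<^sup>2))
      = - ((real N - 3) / (2 * (\<rho> - m\<^sup>2))) * (x - m)\<^sup>2"
    by (simp only: minus_mult_left times_divide_eq_left minus_divide_left)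
  with log_weight_ratio_le[OF True, of "real N - 3"] N
  have "log_weight_ratio (real N - 3) x
      \<le> 6 * \<rho> / (\<rho> - m\<^sup>2) + - ((real N - 3) / (2 * (\<rho> - m\<^sup>2))) * (x - m)\<^sup>2"
    by linarith
  then have "exp (log_weight_ratio (real N - 3) x)
      \<le> exp (6 * \<rho> / (\<rho> - m\<^sup>2)) * exp (- ((real N - 3) / (2 * (\<rho> - m\<^sup>2))) * (x - m)\<^sup>2)"
    by (simp add: exp_add[symmetric])
  with can_weight_m_pos show ?thesis
    unfolding can_weight_eq_exp_log_weight_ratio[OF True N]
    by (simp add: mult.assoc mult.left_commute[of "exp _"])
next
  case False
  with sq_le_rho_of_abs_le[OF x] have "x\<^sup>2 = \<rho>" by simp
  then have "can_weight N \<mu> \<rho> x = 0" by (simp add: can_weight_def)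
  with can_weight_m_pos[of N] show ?thesis
    by (auto intro!: mult_nonneg_nonneg less_imp_le)
qed

lemma can_weight_ge_near_m:
  obtains \<delta> c where "\<delta> > 0" and "c > 0" and "{m - \<delta>..m + \<delta>} \<subseteq> {- sqrt \<rho>..sqrt \<rho>}"
    and "\<And>N x. N \<ge> 3 \<Longrightarrow> \<bar>x - m\<bar> \<le> \<delta> \<Longrightarrow> (real N - 3) * (x - m)\<^sup>2 \<le> 1 \<Longrightarrow>
           c * can_weight N \<mu> \<rho> m \<le> can_weight N \<mu> \<rho> x"
proof -
  let ?a = "\<rho> - m\<^sup>2"
  define \<delta> where "\<delta> = min 1 (min (?a / (4 * sqrt \<rho>)) ((sqrt \<rho> - \<bar>m\<bar>) / 2))"
  define c where "c = exp (- (4 * \<rho> / ?a\<^sup>2 + 1 / (2 * ?a) + 3 * sqrt \<rho> / ?a))"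
  have "\<delta> > 0"
    unfolding \<delta>_def using rho_minus_m_sq_pos m_lt rho_pos by auto
  have \<delta>_le: "\<delta> \<le> 1" "\<delta> \<le> ?a / (4 * sqrt \<rho>)" "\<delta> \<le> (sqrt \<rho> - \<bar>m\<bar>) / 2"
    unfolding \<delta>_def by linarith+
  have inside: "\<bar>x\<bar> < sqrt \<rho>" if "\<bar>x - m\<bar> \<le> \<delta>" for x
  proof -
    have "\<bar>x\<bar> \<le> \<bar>x - m\<bar> + \<bar>m\<bar>"
      using abs_triangle_ineq[of "x - m" m] by simp
    moreover have "2 * \<delta> \<le> sqrt \<rho> - \<bar>m\<bar>"
      using \<delta>_le(3) by simp
    ultimately show ?thesis
      using that m_lt by linarith
  qed
  have sub: "{m - \<delta>..m + \<delta>} \<subseteq> {- sqrt \<rho>..sqrt \<rho>}"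
  proof
    fix x assume "x \<in> {m - \<delta>..m + \<delta>}"
    then have "\<bar>x\<bar> < sqrt \<rho>"
      by (intro inside) auto
    then show "x \<in> {- sqrt \<rho>..sqrt \<rho>}"
      by auto
  qed
  have lower: "c * can_weight N \<mu> \<rho> m \<le> can_weight N \<mu> \<rho> x"
    if N: "N \<ge> 3" and d: "\<bar>x - m\<bar> \<le> \<delta>" and nd: "(real N - 3) * (x - m)\<^sup>2 \<le> 1" for N x
  proof -
    have "x\<^sup>2 < \<rho>"
      using inside[OF d] rho_pos
      by (metis abs_ge_zero power2_abs power_strict_mono real_sqrt_pow2 less_imp_le zero_less_numeral)
    have "ln c \<le> log_weight_ratio (real N - 3) x"
      unfolding c_def ln_exp using inside[OF d] d \<delta>_le N nd by (intro log_weight_ratio_ge) auto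
    then have "c \<le> exp (log_weight_ratio (real N - 3) x)"
      unfolding c_def by simp
    from mult_right_mono[OF this less_imp_le[OF can_weight_m_pos]] show ?thesis
      unfolding can_weight_eq_exp_log_weight_ratio[OF \<open>x\<^sup>2 < \<rho>\<close> N] by (simp add: mult.commute)
  qed
  have "c > 0"
    unfolding c_def by simp
  show ?thesis
    using \<open>\<delta> > 0\<close> \<open>c > 0\<close> sub lower by (rule that)
qed

lemma integral_can_weight_abs_dist_le:
  assumes N: "N > 3"
  shows "integral {- sqrt \<rho>..sqrt \<rho>} (\<lambda>x. can_weight N \<mu> \<rho> x * \<bar>x - m\<bar>)
           \<le> exp (6 * \<rho> / (\<rho> - m\<^sup>2)) * can_weight N \<mu> \<rho> m * (2 * (\<rho> - m\<^sup>2) / (real N - 3))"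
proof -
  let ?I = "{- sqrt \<rho>..sqrt \<rho>}" and ?E = "exp (6 * \<rho> / (\<rho> - m\<^sup>2)) * can_weight N \<mu> \<rho> m"
  define c where "c = (real N - 3) / (2 * (\<rho> - m\<^sup>2))"
  have c: "c > 0" unfolding c_def using N rho_minus_m_sq_pos by simp
  have E: "?E \<ge> 0" using can_weight_m_pos[of N] by simp
  have "integral ?I (\<lambda>x. can_weight N \<mu> \<rho> x * \<bar>x - m\<bar>)
      \<le> integral ?I (\<lambda>x. ?E * (\<bar>x - m\<bar> * exp (- c * (x - m)\<^sup>2)))"
  proof (rule integral_le)
    fix x assume "x \<in> ?I"
    then have "\<bar>x\<bar> \<le> sqrt \<rho>" by auto
    with N have "can_weight N \<mu> \<rho> x \<le> ?E * exp (- c * (x - m)\<^sup>2)"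
      unfolding c_def by (intro can_weight_le_gaussian) auto
    from mult_right_mono[OF this abs_ge_zero[of "x - m"]]
    show "can_weight N \<mu> \<rho> x * \<bar>x - m\<bar> \<le> ?E * (\<bar>x - m\<bar> * exp (- c * (x - m)\<^sup>2))"
      by (simp add: ac_simps)
  qed (use continuous_on_can_weight[OF N] in \<open>intro integrable_continuous_interval continuous_intros; simp\<close>)+
  also have "\<dots> = ?E * integral ?I (\<lambda>x. \<bar>x - m\<bar> * exp (- c * (x - m)\<^sup>2))"
    by simp
  also have "\<dots> \<le> ?E * (1 / c)"
    using m_lt E c by (intro mult_left_mono integral_abs_gaussian_moment_le) auto
  finally show ?thesis
    unfolding c_def by simp
qed

lemma integral_can_weight_ge:
  obtains c N0 where "c > 0" and "N0 \<ge> 4"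
    and "\<And>N. N \<ge> N0 \<Longrightarrow>
           c * can_weight N \<mu> \<rho> m / sqrt (real N - 3) \<le> integral {- sqrt \<rho>..sqrt \<rho>} (can_weight N \<mu> \<rho>)"
proof -
  obtain \<delta> c where \<delta>: "\<delta> > 0" and c: "c > 0" and window: "{m - \<delta>..m + \<delta>} \<subseteq> {- sqrt \<rho>..sqrt \<rho>}"
    and near: "\<And>N x. N \<ge> 3 \<Longrightarrow> \<bar>x - m\<bar> \<le> \<delta> \<Longrightarrow> (real N - 3) * (x - m)\<^sup>2 \<le> 1 \<Longrightarrow>
                 c * can_weight N \<mu> \<rho> m \<le> can_weight N \<mu> \<rho> x"
    by (rule can_weight_ge_near_m) blast
  have "2 * c * can_weight N \<mu> \<rho> m / sqrt (real N - 3) \<le> integral {- sqrt \<rho>..sqrt \<rho>} (can_weight N \<mu> \<rho>)"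
    if "nat \<lceil>1 / \<delta>\<^sup>2\<rceil> + 4 \<le> N" for N
  proof -
    from that have N4: "real N \<ge> 4" and Nd: "real N - 3 \<ge> 1 / \<delta>\<^sup>2"
      by linarith+
    define n where "n = real N - 3"
    define h where "h = 1 / sqrt n"
    have n: "n \<ge> 1" unfolding n_def using N4 by simp
    have h: "h > 0" "n * h\<^sup>2 = 1"
      using n unfolding h_def by (auto simp: power_divide)
    have "sqrt (1 / \<delta>\<^sup>2) \<le> sqrt n"
      using Nd unfolding n_def by (rule real_sqrt_le_mono)
    then have "1 / \<delta> \<le> sqrt n"
      using \<delta> by (simp add: real_sqrt_divide)
    then have h_le: "h \<le> \<delta>"
      unfolding h_def using \<delta> n by (simp add: divide_le_eq mult.commute pos_divide_le_eq)
    have "2 * h * (c * can_weight N \<mu> \<rho> m) \<le> integral {- sqrt \<rho>..sqrt \<rho>} (can_weight N \<mu> \<rho>)"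
    proof (rule integral_ge_of_lower_bound_near)
      show "{m - h..m + h} \<subseteq> {- sqrt \<rho>..sqrt \<rho>}" using window h_le by auto
      fix x assume "x \<in> {m - h..m + h}"
      then have "\<bar>x - m\<bar> \<le> h" by auto
      moreover have "n * (x - m)\<^sup>2 \<le> n * h\<^sup>2"
        using power_mono[OF calculation abs_ge_zero, of 2] n by (intro mult_left_mono) auto
      ultimately show "c * can_weight N \<mu> \<rho> m \<le> can_weight N \<mu> \<rho> x"
        using near[of N x] N4 h h_le unfolding n_def by auto
    qed (use continuous_on_can_weight[of N] can_weight_nonneg N4 h in auto)
    then show ?thesis
      unfolding h_def n_def by simp
  qed
  moreover have "2 * c > 0" using c by simp
  ultimately show ?thesis
    using that[of "2 * c" "nat \<lceil>1 / \<delta>\<^sup>2\<rceil> + 4"] by auto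
qed

lemma can_weight_concentration:
  "\<exists>C N0. \<forall>N \<ge> N0. 0 < integral {- sqrt \<rho>..sqrt \<rho>} (can_weight N \<mu> \<rho>) \<and>
     integral {- sqrt \<rho>..sqrt \<rho>} (\<lambda>x. can_weight N \<mu> \<rho> x * \<bar>x - m\<bar>)
       \<le> C / sqrt N * integral {- sqrt \<rho>..sqrt \<rho>} (can_weight N \<mu> \<rho>)"
proof -
  obtain c N0 where c: "c > 0" and N0: "N0 \<ge> 4"
    and lower: "\<And>N. N \<ge> N0 \<Longrightarrow>
      c * can_weight N \<mu> \<rho> m / sqrt (real N - 3) \<le> integral {- sqrt \<rho>..sqrt \<rho>} (can_weight N \<mu> \<rho>)"
    by (rule integral_can_weight_ge) blast
  define E where "E = exp (6 * \<rho> / (\<rho> - m\<^sup>2))"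
  define C where "C = 4 * E * (\<rho> - m\<^sup>2) / c"
  have "0 < integral {- sqrt \<rho>..sqrt \<rho>} (can_weight N \<mu> \<rho>) \<and>
     integral {- sqrt \<rho>..sqrt \<rho>} (\<lambda>x. can_weight N \<mu> \<rho> x * \<bar>x - m\<bar>)
       \<le> C / sqrt N * integral {- sqrt \<rho>..sqrt \<rho>} (can_weight N \<mu> \<rho>)" if N: "N \<ge> N0" for N
  proof -
    let ?I = "{- sqrt \<rho>..sqrt \<rho>}" and ?w = "can_weight N \<mu> \<rho>" and ?wm = "can_weight N \<mu> \<rho> m"
    define n where "n = real N - 3"
    have n: "n \<ge> 1" and N4: "real N \<ge> 4"
      unfolding n_def using N N0 by auto
    have "sqrt N \<le> sqrt (4 * n)"
      unfolding n_def using N4 by simp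
    then have "sqrt N * sqrt n \<le> 2 * sqrt n * sqrt n"
      using n by (intro mult_right_mono) (simp_all add: real_sqrt_mult)
    also have "\<dots> = 2 * n"
      using n by simp
    finally have root: "sqrt N * sqrt n \<le> 2 * n" .
    have "integral ?I (\<lambda>x. ?w x * \<bar>x - m\<bar>) \<le> E * ?wm * (2 * (\<rho> - m\<^sup>2) / n)"
      using integral_can_weight_abs_dist_le[of N] N4 unfolding E_def n_def by simp
    also have "\<dots> = 4 * E * (\<rho> - m\<^sup>2) * ?wm / (2 * n)"
      by simp
    also have "\<dots> \<le> 4 * E * (\<rho> - m\<^sup>2) * ?wm / (sqrt N * sqrt n)"
      using root n N4 rho_minus_m_sq_pos can_weight_m_pos[of N] unfolding E_def
      by (intro divide_left_mono mult_nonneg_nonneg) auto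
    also have "\<dots> = C / sqrt N * (c * ?wm / sqrt n)"
      unfolding C_def using c by simp
    also have "\<dots> \<le> C / sqrt N * integral ?I ?w"
      using lower[OF N] c rho_minus_m_sq_pos unfolding C_def E_def n_def by (intro mult_left_mono) auto
    finally have "integral ?I (\<lambda>x. ?w x * \<bar>x - m\<bar>) \<le> C / sqrt N * integral ?I ?w" .
    moreover have "0 < c * ?wm / sqrt n"
      using c can_weight_m_pos n by simp
    with lower[OF N] have "0 < integral ?I ?w"
      unfolding n_def by linarith
    ultimately show ?thesis by simp
  qed
  then show ?thesis by blast
qed

end

theorem theorem4p25:
  fixes \<rho> m \<mu> :: real and f :: "real ^ 'k::finite \<Rightarrow> real"
  assumes "\<rho> > 0" and "\<bar>m\<bar> < sqrt \<rho>" and "\<mu> = - m / (\<rho> - m\<^sup>2)"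
    and "bounded (range f)" and "1-lipschitz_on UNIV f"
  shows "\<exists>C N0. \<forall>N \<ge> N0. \<forall>\<iota> :: 'k \<Rightarrow> nat. inj \<iota> \<and> (\<forall>j. \<iota> j < N) \<longrightarrow>
           \<bar>mc_expect N m \<rho> (f \<circ> restrict_to \<iota>) - can_expect N \<mu> \<rho> (f \<circ> restrict_to \<iota>)\<bar>
             \<le> C / sqrt (real N)"
proof -
  let ?I = "{- sqrt \<rho>..sqrt \<rho>}"
  obtain B where B: "\<And>v. \<bar>f v\<bar> \<le> B"
    using assms(4) unfolding bounded_iff by auto
  obtain C N0 where conc: "\<And>N. N \<ge> N0 \<Longrightarrow> 0 < integral ?I (can_weight N \<mu> \<rho>) \<and>
      integral ?I (\<lambda>x. can_weight N \<mu> \<rho> x * \<bar>x - m\<bar>) \<le> C / sqrt N * integral ?I (can_weight N \<mu> \<rho>)"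
    using can_weight_concentration[OF assms(1-3)] by blast
  define L where "L = CARD('k) * (1 + 2 * sqrt \<rho> / sqrt (\<rho> - m\<^sup>2))"
  have a: "\<rho> - m\<^sup>2 > 0"
    using assms(1-3) by (rule rho_minus_m_sq_pos)
  have L: "L \<ge> 0"
    unfolding L_def using a assms(1) by (intro mult_nonneg_nonneg add_nonneg_nonneg divide_nonneg_nonneg) auto
  have "\<bar>mc_expect N m \<rho> (f \<circ> restrict_to \<iota>) - can_expect N \<mu> \<rho> (f \<circ> restrict_to \<iota>)\<bar> \<le> L * C / sqrt N"
    if N: "N \<ge> max N0 4" and \<iota>: "\<forall>j. \<iota> j < N" for N and \<iota> :: "'k \<Rightarrow> nat"
  proof -
    have "\<bar>mc_expect N m \<rho> (f \<circ> restrict_to \<iota>) - can_expect N \<mu> \<rho> (f \<circ> restrict_to \<iota>)\<bar>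
        \<le> L * (integral ?I (\<lambda>x. can_weight N \<mu> \<rho> x * \<bar>x - m\<bar>) / integral ?I (can_weight N \<mu> \<rho>))"
      unfolding L_def times_divide_eq_right using B assms(1,2,5) \<iota> a N conc[of N]
      by (intro mc_expect_can_expect_dist_le) auto
    also have "\<dots> \<le> L * (C / sqrt N)"
      using conc[of N] N L by (intro mult_left_mono) (auto simp: pos_divide_le_eq)
    finally show ?thesis
      by simp
  qed
  then show ?thesis
    by (intro exI[of _ "L * C"] exI[of _ "max N0 4"]) auto
qed

end
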